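(* In the interval covering setting with known but possibly unequal interval lengths and a covering interval of length $1$, for every $\varepsilon\in(0,1)$ the approximation ratio of the Weighted-Median mechanism is at least $1/\varepsilon$.
   Context: Each agent $i$ has an interval $I_i=[s_i,t_i]$ on the real line whose length $|I_i|>0$ is publicly known; the agents are indexed so that $s_1\le s_2\le\dots\le s_n$. A covering interval $C$ of length $1$ is placed; the cost of agent $i$ is $|I_i|-|I_i\cap C|$ and the social cost is the sum of the agents' costs. For an agent $i$, let $L(i)$ be the set of agents before $i$ in this order. The Weighted-Median mechanism places $C$ at the starting position $s_{i^*}$ (i.e., $C=[s_{i^*},s_{i^*}+1]$) of the leftmost agent $i^*$ such that $\sum_{i\in L(i^* )}|I_i|+|I_{i^*}|\ge\frac12\sum_{i}|I_i|$ and $\sum_{i\in L(i^* )}|I_i|<\frac12\sum_i|I_i|$. The approximation ratio is the supremum over instances of the mechanism's social cost divided by the minimum social cost over all placements of $C$. *)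

theory Defs
  imports Complex_Main "HOL-Library.Extended_Real"
begin

(* An instance: n agents indexed 0..<n, agent i has interval [s i, s i + len i]. *)
definition valid_instance :: "nat \<Rightarrow> (nat \<Rightarrow> real) \<Rightarrow> (nat \<Rightarrow> real) \<Rightarrow> bool" where
  "valid_instance n s len \<longleftrightarrow> n \<ge> 1 \<and> (\<forall>i<n. len i > 0) \<and> (\<forall>i j. i \<le> j \<and> j < n \<longrightarrow> s i \<le> s j)"

definition overlap :: "real \<Rightarrow> real \<Rightarrow> real \<Rightarrow> real \<Rightarrow> real" where
  "overlap a b c d = max 0 (min b d - max a c)"

definition agent_cost :: "(nat \<Rightarrow> real) \<Rightarrow> (nat \<Rightarrow> real) \<Rightarrow> real \<Rightarrow> nat \<Rightarrow> real" where
  "agent_cost s len c i = len i - overlap (s i) (s i + len i) c (c + 1)"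

definition social_cost :: "nat \<Rightarrow> (nat \<Rightarrow> real) \<Rightarrow> (nat \<Rightarrow> real) \<Rightarrow> real \<Rightarrow> real" where
  "social_cost n s len c = (\<Sum>i<n. agent_cost s len c i)"

definition opt_cost :: "nat \<Rightarrow> (nat \<Rightarrow> real) \<Rightarrow> (nat \<Rightarrow> real) \<Rightarrow> real" where
  "opt_cost n s len = (INF c. social_cost n s len c)"

definition wm_agent :: "nat \<Rightarrow> (nat \<Rightarrow> real) \<Rightarrow> nat" where
  "wm_agent n len = (LEAST k. k < n \<and>
      (\<Sum>j<k. len j) + len k \<ge> (\<Sum>j<n. len j) / 2 \<and>
      (\<Sum>j<k. len j) < (\<Sum>j<n. len j) / 2)"

definition wm_position :: "nat \<Rightarrow> (nat \<Rightarrow> real) \<Rightarrow> (nat \<Rightarrow> real) \<Rightarrow> real" where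
  "wm_position n s len = s (wm_agent n len)"

definition wm_cost :: "nat \<Rightarrow> (nat \<Rightarrow> real) \<Rightarrow> (nat \<Rightarrow> real) \<Rightarrow> real" where
  "wm_cost n s len = social_cost n s len (wm_position n s len)"

definition wm_approx_ratio :: ereal where
  "wm_approx_ratio = (SUP (n, s, len) \<in> {(n, s, len). valid_instance n s len \<and> opt_cost n s len > 0}.
       ereal (wm_cost n s len / opt_cost n s len))"

end

theory Submission
  imports Defs
begin

text \<open>
  Take one agent with interval [0, 1] and two agents with interval [1/2, 1 + h], where
  0 < h < 1/2. The total length is 2 + 2h, so the weighted median is the second agent and
  the mechanism places C = [1/2, 3/2]: the two long agents are covered, but half of the
  first agent is not, for a social cost of 1/2. Placing C = [h, 1 + h] instead covers the
  two long agents and all but h of the first one, and no placement does better. The ratio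
  is 1/(2h), which is 1/\<epsilon> for h = \<epsilon>/2.
\<close>

lemma agent_cost_nonneg:
  assumes "0 \<le> len i"
  shows "0 \<le> agent_cost s len c i"
  using assms unfolding agent_cost_def overlap_def by auto

lemma agent_cost_ge_left_part:
  assumes "0 \<le> len i"
  shows "min (len i) (c - s i) \<le> agent_cost s len c i"
  using assms unfolding agent_cost_def overlap_def by (auto simp: min_def max_def)

lemma agent_cost_ge_right_part:
  assumes "0 \<le> len i"
  shows "min (len i) (s i + len i - (c + 1)) \<le> agent_cost s len c i"
  using assms unfolding agent_cost_def overlap_def by (auto simp: min_def max_def)

lemma agent_cost_covered:
  assumes "c \<le> s i" and "s i + len i \<le> c + 1" and "0 \<le> len i"
  shows "agent_cost s len c i = 0"
  using assms unfolding agent_cost_def overlap_def by simp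

lemma agent_cost_left_overhang:
  assumes "s i \<le> c" and "c \<le> s i + len i" and "s i + len i \<le> c + 1"
  shows "agent_cost s len c i = c - s i"
  using assms unfolding agent_cost_def overlap_def by simp

lemma opt_cost_eqI:
  assumes "\<And>c. m \<le> social_cost n s len c" and "social_cost n s len c\<^sub>0 = m"
  shows "opt_cost n s len = m"
  unfolding opt_cost_def
proof (rule antisym)
  have "bdd_below (range (social_cost n s len))"
    using assms(1) by (rule bdd_belowI2)
  then show "(INF c. social_cost n s len c) \<le> m"
    using cINF_lower[of "social_cost n s len" UNIV c\<^sub>0] assms(2) by simp
  show "m \<le> (INF c. social_cost n s len c)"
    by (rule cINF_greatest) (use assms(1) in auto)
qed

lemma wm_agent_eqI:
  assumes nonneg: "\<And>i. i < n \<Longrightarrow> 0 \<le> len i" and "k < n"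
    and below: "(\<Sum>j<k. len j) < (\<Sum>j<n. len j) / 2"
    and above: "(\<Sum>j<k. len j) + len k \<ge> (\<Sum>j<n. len j) / 2"
  shows "wm_agent n len = k"
  unfolding wm_agent_def
proof (rule Least_equality)
  show "k < n \<and> (\<Sum>j<k. len j) + len k \<ge> (\<Sum>j<n. len j) / 2
          \<and> (\<Sum>j<k. len j) < (\<Sum>j<n. len j) / 2"
    using assms by simp
next
  fix y
  assume y: "y < n \<and> (\<Sum>j<y. len j) + len y \<ge> (\<Sum>j<n. len j) / 2
               \<and> (\<Sum>j<y. len j) < (\<Sum>j<n. len j) / 2"
  show "k \<le> y"
  proof (rule ccontr)
    assume "\<not> k \<le> y"
    then have "(\<Sum>j<Suc y. len j) \<le> (\<Sum>j<k. len j)"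
      using \<open>k < n\<close> by (intro sum_mono2) (auto intro: nonneg)
    then show False
      using y below by simp
  qed
qed

lemma ereal_ratio_le_wm_approx_ratio:
  assumes "valid_instance n s len" and "opt_cost n s len > 0"
  shows "ereal (wm_cost n s len / opt_cost n s len) \<le> wm_approx_ratio"
  unfolding wm_approx_ratio_def
  by (rule SUP_upper2[where i = "(n, s, len)"]) (use assms in auto)

definition hard_start :: "nat \<Rightarrow> real" where
  "hard_start i = (if i = 0 then 0 else 1/2)"

definition hard_len :: "real \<Rightarrow> nat \<Rightarrow> real" where
  "hard_len h i = (if i = 0 then 1 else 1/2 + h)"

lemma social_cost_hard:
  "social_cost 3 hard_start (hard_len h) c
     = agent_cost hard_start (hard_len h) c 0 + 2 * agent_cost hard_start (hard_len h) c 1"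
proof -
  have "agent_cost hard_start (hard_len h) c 2 = agent_cost hard_start (hard_len h) c 1"
    by (simp add: agent_cost_def hard_start_def hard_len_def)
  then show ?thesis
    by (simp add: social_cost_def eval_nat_numeral)
qed

context
  fixes h :: real
  assumes h_pos: "0 < h" and h_small: "h < 1/2"
begin

lemma valid_instance_hard: "valid_instance 3 hard_start (hard_len h)"
  using h_pos unfolding valid_instance_def hard_start_def hard_len_def by auto

lemma opt_cost_hard: "opt_cost 3 hard_start (hard_len h) = h"
proof (rule opt_cost_eqI)
  fix c
  have "min 1 c \<le> agent_cost hard_start (hard_len h) c 0"
       "min 1 (- c) \<le> agent_cost hard_start (hard_len h) c 0"
    using agent_cost_ge_left_part[of "hard_len h" 0 c hard_start]
          agent_cost_ge_right_part[of "hard_len h" 0 hard_start c]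
    by (simp_all add: hard_start_def hard_len_def)
  moreover have "min (1/2 + h) (h - c) \<le> agent_cost hard_start (hard_len h) c 1"
                "0 \<le> agent_cost hard_start (hard_len h) c 1"
    using h_pos agent_cost_ge_right_part[of "hard_len h" 1 hard_start c]
          agent_cost_nonneg[of "hard_len h" 1 hard_start c]
    by (simp_all add: hard_start_def hard_len_def)
  ultimately show "h \<le> social_cost 3 hard_start (hard_len h) c"
    unfolding social_cost_hard using h_pos h_small by (auto simp: min_def split: if_splits)
next
  show "social_cost 3 hard_start (hard_len h) h = h"
    unfolding social_cost_hard using h_pos h_small
    by (simp add: agent_cost_left_overhang agent_cost_covered hard_start_def hard_len_def)
qed

lemma wm_agent_hard: "wm_agent 3 (hard_len h) = 1"
proof -
  have total: "(\<Sum>j<3. hard_len h j) = 2 + 2 * h"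
    by (simp add: hard_len_def eval_nat_numeral)
  show ?thesis
    by (rule wm_agent_eqI) (use h_pos in \<open>simp_all add: total, simp_all add: hard_len_def\<close>)
qed

lemma wm_cost_hard: "wm_cost 3 hard_start (hard_len h) = 1/2"
  unfolding wm_cost_def wm_position_def wm_agent_hard social_cost_hard using h_pos h_small
  by (simp add: agent_cost_left_overhang agent_cost_covered hard_start_def hard_len_def)

end

theorem proposition1:
  fixes \<epsilon> :: real
  assumes "0 < \<epsilon>" and "\<epsilon> < 1"
  shows "wm_approx_ratio \<ge> ereal (1 / \<epsilon>)"
proof -
  define h where "h = \<epsilon> / 2"
  have h: "0 < h" "h < 1/2"
    using assms by (simp_all add: h_def)
  have "1 / \<epsilon> = wm_cost 3 hard_start (hard_len h) / opt_cost 3 hard_start (hard_len h)"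
    using h by (simp add: wm_cost_hard opt_cost_hard h_def)
  also have "ereal \<dots> \<le> wm_approx_ratio"
    using h by (intro ereal_ratio_le_wm_approx_ratio valid_instance_hard) (simp_all add: opt_cost_hard)
  finally show ?thesis .
qed

end
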